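(* In the setting described in the context, for every closed point $p$ of $\mathbb{P}^1_K$ with singular fibre $X_p$, the resultant $\operatorname{res}(\Delta_p(s,t),\delta_p(s,t))$ of the binary forms $\Delta_p$ and $\delta_p$ is nonzero.
   Context: $K$ is a number field, $a_1,a_2,e\ge 0$ are integers, and $X$ is the smooth surface of bidegree $(e,2)$ in the $\mathbb{P}^2$-bundle $\mathbb{F}(0,a_1,a_2) = \mathbb{P}(\mathcal{O}\oplus\mathcal{O}(a_1)\oplus\mathcal{O}(a_2))$ over $\mathbb{P}^1_K$ cut out by $Q_{(s,t)}(\mathbf{x}) = \sum_{0\le i,j\le 2} f_{i,j}(s,t)x_ix_j$, with $f_{i,j}=f_{j,i}\in\mathcal{O}_K[s,t]$ binary forms of degree $a_i+a_j+e$ ($a_0=0$); $\pi:(s:t;\mathbf{x})\mapsto (s:t)$. Let $\Delta(s,t) = -4\det(f_{i,j}(s,t))$ and assume $t\nmid\Delta(s,t)$. Closed points $p$ with singular fibre correspond to irreducible factors $\Delta_p(s,t)\in\mathcal{O}_K[s,t]$ of $\Delta$ (up to constants) with $\Delta_p(1,0)\ne 0$; $\theta_p\in\overline{K}$ is a root of $\Delta_p(s,1)$ and $K(p)=K(\theta_p)$. The conic $Q_{(\theta_p,1)}(\mathbf{x})=0$ over $K(p)$ is singular with a unique singular point; $i_p\in\{0,1,2\}$ is the index of its first nonzero coordinate, and $\delta_p(s,t)$ is the discriminant ($\beta^2-4\alpha\gamma$ for $\alpha y^2+\beta yz+\gamma z^2$) of the binary quadratic form obtained by setting $x_{i_p}=0$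 in $Q_{(s,t)}$. *)

theory Defs
  imports "HOL-Analysis.Analysis" "Subresultants.Resultant_Prelim"
begin

text \<open>Number fields are modelled as subfields K of the complex numbers that are
  finite-dimensional over the rationals; the complex numbers serve as an algebraic
  closure containing the algebraic closure of K.\<close>

definition subfield_C :: "complex set \<Rightarrow> bool" where
  "subfield_C K \<longleftrightarrow> 0 \<in> K \<and> 1 \<in> K \<and> (\<forall>x\<in>K. \<forall>y\<in>K. x + y \<in> K \<and> x * y \<in> K \<and> - x \<in> K)
     \<and> (\<forall>x\<in>K. x \<noteq> 0 \<longrightarrow> inverse x \<in> K)"

definition number_field :: "complex set \<Rightarrow> bool" where
  "number_field K \<longleftrightarrow> subfield_C K \<and>
     (\<exists>bs :: complex list. \<forall>z\<in>K. \<exists>qs :: rat list. length qs = length bs \<and>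
         z = (\<Sum>i<length bs. of_rat (qs ! i) * bs ! i))"

definition algebraic_integer :: "complex \<Rightarrow> bool" where
  "algebraic_integer z \<longleftrightarrow> (\<exists>p :: int poly. monic p \<and> poly (map_poly of_int p) z = 0)"

definition ring_of_integers :: "complex set \<Rightarrow> complex set" where
  "ring_of_integers K = {z \<in> K. algebraic_integer z}"

definition poly_over :: "complex set \<Rightarrow> complex poly \<Rightarrow> bool" where
  "poly_over R p \<longleftrightarrow> (\<forall>i. coeff p i \<in> R)"

definition irreducible_over :: "complex set \<Rightarrow> complex poly \<Rightarrow> bool" where
  "irreducible_over K p \<longleftrightarrow> poly_over K p \<and> degree p > 0 \<and>
     (\<forall>q r. poly_over K q \<longrightarrow> poly_over K r \<longrightarrow> p = q * r \<longrightarrow> degree q = 0 \<or> degree r = 0)"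

text \<open>A binary form F(s,t) of degree d is represented by its dehomogenisation
  f(s) = F(s,1), a univariate polynomial of degree at most d;
  F(s,t) = sum over k of coeff f k * s^k * t^(d-k).\<close>
definition hom_eval :: "nat \<Rightarrow> complex poly \<Rightarrow> complex \<Rightarrow> complex \<Rightarrow> complex" where
  "hom_eval d f s t = (\<Sum>k\<le>d. coeff f k * s ^ k * t ^ (d - k))"

text \<open>Resultant of binary forms of degrees m and n (Sylvester determinant with the
  formal degrees m and n).\<close>
definition form_resultant :: "nat \<Rightarrow> nat \<Rightarrow> complex poly \<Rightarrow> complex poly \<Rightarrow> complex" where
  "form_resultant m n f g = resultant_sub m n f g"

definition Qform :: "(nat \<Rightarrow> nat) \<Rightarrow> nat \<Rightarrow> (nat \<Rightarrow> nat \<Rightarrow> complex poly)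
     \<Rightarrow> complex \<Rightarrow> complex \<Rightarrow> (nat \<Rightarrow> complex) \<Rightarrow> complex" where
  "Qform a e f s t x = (\<Sum>i<3. \<Sum>j<3. hom_eval (a i + a j + e) (f i j) s t * x i * x j)"

text \<open>Smoothness of X = {Q = 0} in F(0,a1,a2): X is the quotient of the zero set of Q in
  {(s,t) \<noteq> 0, x \<noteq> 0} by a free torus action, so X is smooth iff the gradient of Q with
  respect to (s,t,x0,x1,x2) does not vanish at any geometric point of that zero set.\<close>
definition smooth_surface :: "(nat \<Rightarrow> nat) \<Rightarrow> nat \<Rightarrow> (nat \<Rightarrow> nat \<Rightarrow> complex poly) \<Rightarrow> bool" where
  "smooth_surface a e f \<longleftrightarrow>
     (\<forall>s t x. (s \<noteq> 0 \<or> t \<noteq> 0) \<longrightarrow> (\<exists>i<3. x i \<noteq> 0) \<longrightarrow> Qform a e f s t x = 0 \<longrightarrow>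
        \<not> (deriv (\<lambda>s'. Qform a e f s' t x) s = 0 \<and>
            deriv (\<lambda>t'. Qform a e f s t' x) t = 0 \<and>
            (\<forall>i<3. deriv (\<lambda>y. Qform a e f s t (x(i := y))) (x i) = 0)))"

definition det3 :: "(nat \<Rightarrow> nat \<Rightarrow> 'a :: comm_ring_1) \<Rightarrow> 'a" where
  "det3 M = M 0 0 * M 1 1 * M 2 2 + M 0 1 * M 1 2 * M 2 0 + M 0 2 * M 1 0 * M 2 1
          - M 0 2 * M 1 1 * M 2 0 - M 0 1 * M 1 0 * M 2 2 - M 0 0 * M 1 2 * M 2 1"

text \<open>Dehomogenisation Delta(s,1) of Delta(s,t) = -4 det(f_ij(s,t)), a binary form of degree
  2 a1 + 2 a2 + 3 e.\<close>
definition Delta :: "(nat \<Rightarrow> nat \<Rightarrow> complex poly) \<Rightarrow> complex poly" where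
  "Delta f = - 4 * det3 f"

definition conic_singular_point :: "(nat \<Rightarrow> nat) \<Rightarrow> nat \<Rightarrow> (nat \<Rightarrow> nat \<Rightarrow> complex poly)
     \<Rightarrow> complex \<Rightarrow> (nat \<Rightarrow> complex) \<Rightarrow> bool" where
  "conic_singular_point a e f \<theta> x \<longleftrightarrow> (\<exists>i<3. x i \<noteq> 0) \<and>
     (\<forall>i<3. deriv (\<lambda>y. Qform a e f \<theta> 1 (x(i := y))) (x i) = 0)"

text \<open>delta_p (dehomogenised): discriminant beta^2 - 4 alpha gamma of the binary quadratic form
  alpha y^2 + beta y z + gamma z^2 = Q restricted to x_i = 0, where {j,k} are the other indices:
  alpha = f_jj, beta = 2 f_jk, gamma = f_kk.  It is a binary form of degree 2(a_j + a_k + e).\<close>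
definition small_delta :: "(nat \<Rightarrow> nat \<Rightarrow> complex poly) \<Rightarrow> nat \<Rightarrow> nat \<Rightarrow> complex poly" where
  "small_delta f j k = (2 * f j k) ^ 2 - 4 * f j j * f k k"

end

theory Submission
  imports Defs "Subresultants.Subresultant_Gcd" "HOL-Computational_Algebra.Field_as_Ring"
    "HOL-Computational_Algebra.Fundamental_Theorem_Algebra"
begin

text \<open>If the resultant vanished, \<open>\<Delta>\<^sub>p\<close> and \<open>\<delta>\<^sub>p\<close> would have a common complex root; as \<open>\<Delta>\<^sub>p\<close> is
  irreducible over \<open>K\<close> and \<open>\<delta>\<^sub>p\<close> has coefficients in \<open>K\<close>, then \<open>\<delta>\<^sub>p(\<theta>\<^sub>p) = 0\<close>. The symmetric
  matrix \<open>M = (f\<^sub>i\<^sub>j(\<theta>\<^sub>p, 1))\<close> has the singular point \<open>x\<close> (with \<open>x\<^sub>i \<noteq> 0\<close>) in its kernel, and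
  \<open>\<delta>\<^sub>p(\<theta>\<^sub>p) = 0\<close> says that the \<open>{j,k}\<close>-minor of \<open>M\<close> is singular, which yields a second kernel vector
  \<open>v\<close> with \<open>v\<^sub>i = 0\<close>. On the plane spanned by \<open>x\<close> and \<open>v\<close> the \<open>s\<close>-derivative of \<open>Q\<close> is a binary
  quadratic form, so it has a nonzero isotropic vector \<open>w\<close>. At \<open>(\<theta>\<^sub>p : 1; w)\<close> the \<open>x\<close>-gradient
  \<open>2Mw\<close> and the \<open>s\<close>-derivative vanish, and by Euler's identity so does the \<open>t\<close>-derivative:
  the surface is singular there, contradicting smoothness.\<close>

section \<open>Resultants with a prescribed formal degree\<close>

lemma sylvester_mat_sub_delete_0_0:
  assumes "coeff q (Suc n) = 0"
  shows "mat_delete (sylvester_mat_sub m (Suc n) p q) 0 0 = sylvester_mat_sub m n p q"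
proof (rule eq_matI, auto simp: mat_delete_def sylvester_mat_sub_def)
  fix i j assume "i - n \<le> Suc j" "\<not> i - n \<le> j" "\<not> i < n"
  then have "i - j = Suc n" by auto
  then show "coeff q (i - j) = 0" using assms by simp
qed

lemma resultant_sub_Suc:
  fixes p q :: "'a :: comm_ring_1 poly"
  assumes "coeff q (Suc n) = 0"
  shows "resultant_sub m (Suc n) p q = coeff p m * resultant_sub m n p q"
proof -
  let ?S = "sylvester_mat_sub m (Suc n) p q"
  have "det ?S = (\<Sum>i<m + Suc n. ?S $$ (i,0) * cofactor ?S i 0)"
    by (rule laplace_expansion_column[OF sylvester_mat_sub_carrier]) simp
  also have "\<dots> = (\<Sum>i<m + Suc n. if i = 0 then coeff p m * cofactor ?S 0 0 else 0)"
    by (rule sum.cong) (auto simp: sylvester_mat_sub_index assms)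
  also have "\<dots> = coeff p m * cofactor ?S 0 0" by simp
  also have "cofactor ?S 0 0 = resultant_sub m n p q"
    unfolding cofactor_def sylvester_mat_sub_delete_0_0[OF assms] resultant_sub_def by simp
  finally show ?thesis unfolding resultant_sub_def .
qed

lemma resultant_sub_degree_le:
  fixes p q :: "'a :: comm_ring_1 poly"
  assumes "degree q \<le> n"
  shows "resultant_sub (degree p) n p q = lead_coeff p ^ (n - degree q) * resultant p q"
  using assms
proof (induction n)
  case 0
  then show ?case by (simp add: resultant_sub)
next
  case (Suc n)
  show ?case
  proof (cases "degree q = Suc n")
    case True
    then show ?thesis by (simp add: resultant_sub)
  next
    case False
    with Suc.prems have le: "degree q \<le> n" by auto
    then have "coeff q (Suc n) = 0" by (simp add: coeff_eq_0)
    from resultant_sub_Suc[OF this] Suc.IH[OF le] le show ?thesis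
      by (simp add: Suc_diff_le)
  qed
qed

lemma resultant_sub_eq_0_imp_common_root:
  fixes p q :: "complex poly"
  assumes "degree q \<le> n" "degree p > 0" "resultant_sub (degree p) n p q = 0"
  obtains z where "poly p z = 0" "poly q z = 0"
proof -
  have "resultant p q = 0"
    using assms resultant_sub_degree_le[OF assms(1), of p] by auto
  then have "degree (gcd p q) \<noteq> 0" by (simp add: resultant_0_gcd)
  then obtain z where "poly (gcd p q) z = 0"
    using fundamental_theorem_of_algebra[of "gcd p q"] constant_degree[of "gcd p q"] by auto
  then show ?thesis using that by (metis dvd_trans poly_eq_0_iff_dvd gcd_dvd1 gcd_dvd2)
qed

section \<open>Polynomials over a subfield of the complex numbers\<close>

locale complex_subfield =
  fixes K :: "complex set"
  assumes subfield: "subfield_C K"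
begin

lemma zero_closed: "0 \<in> K" and one_closed: "1 \<in> K"
  and add_closed: "x \<in> K \<Longrightarrow> y \<in> K \<Longrightarrow> x + y \<in> K"
  and mult_closed: "x \<in> K \<Longrightarrow> y \<in> K \<Longrightarrow> x * y \<in> K"
  and uminus_closed: "x \<in> K \<Longrightarrow> - x \<in> K"
  using subfield unfolding subfield_C_def by blast+

lemma inverse_closed: "x \<in> K \<Longrightarrow> inverse x \<in> K"
  using subfield zero_closed unfolding subfield_C_def by (cases "x = 0") simp_all

lemma diff_closed: "x \<in> K \<Longrightarrow> y \<in> K \<Longrightarrow> x - y \<in> K"
  using add_closed[of x "- y"] uminus_closed[of y] by simp

lemma divide_closed: "x \<in> K \<Longrightarrow> y \<in> K \<Longrightarrow> x / y \<in> K"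
  using mult_closed[OF _ inverse_closed, of x y] by (simp add: divide_inverse)

lemma sum_closed: "(\<And>i. i \<in> A \<Longrightarrow> g i \<in> K) \<Longrightarrow> sum g A \<in> K"
  by (induction A rule: infinite_finite_induct) (simp_all add: zero_closed add_closed)

lemma of_nat_closed: "of_nat n \<in> K"
  by (induction n) (simp_all add: zero_closed one_closed add_closed)

lemma poly_over_add: "poly_over K p \<Longrightarrow> poly_over K q \<Longrightarrow> poly_over K (p + q)"
  unfolding poly_over_def by (simp add: add_closed)

lemma poly_over_diff: "poly_over K p \<Longrightarrow> poly_over K q \<Longrightarrow> poly_over K (p - q)"
  unfolding poly_over_def by (simp add: diff_closed)

lemma poly_over_mult: "poly_over K p \<Longrightarrow> poly_over K q \<Longrightarrow> poly_over K (p * q)"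
  unfolding poly_over_def coeff_mult by (simp add: sum_closed mult_closed)

lemma poly_over_monom: "c \<in> K \<Longrightarrow> poly_over K (monom c n)"
  unfolding poly_over_def coeff_monom by (simp add: zero_closed)

lemma poly_over_0: "poly_over K 0"
  unfolding poly_over_def by (simp add: zero_closed)

lemma poly_over_numeral: "poly_over K (numeral n)"
proof -
  have "poly_over K (monom (of_nat (numeral n)) 0)" by (rule poly_over_monom[OF of_nat_closed])
  then show ?thesis by (simp only: monom_0 of_nat_numeral numeral_poly)
qed

lemma poly_over_power: "poly_over K p \<Longrightarrow> poly_over K (p ^ n)"
proof (induction n)
  case 0
  have "poly_over K (monom 1 0)" by (rule poly_over_monom[OF one_closed])
  then show ?case by (simp only: power_0 one_pCons monom_0)
next
  case (Suc n)
  then show ?case unfolding power_Suc by (intro poly_over_mult)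
qed

lemma poly_over_division:
  assumes "poly_over K p" "poly_over K q" "q \<noteq> 0"
  shows "\<exists>d r. poly_over K d \<and> poly_over K r \<and> p = q * d + r \<and> (r = 0 \<or> degree r < degree q)"
  using assms(1)
proof (induction "degree p" arbitrary: p rule: less_induct)
  case less
  show ?case
  proof (cases "p = 0 \<or> degree p < degree q")
    case True
    then show ?thesis using less.prems poly_over_0 by (intro exI[of _ 0] exI[of _ p]) auto
  next
    case False
    then have deg_qp: "degree q \<le> degree p" by auto
    define m where "m = monom (lead_coeff p / lead_coeff q) (degree p - degree q)"
    define p' where "p' = p - m * q"
    have m: "poly_over K m"
      unfolding m_def using less.prems assms(2)
      by (intro poly_over_monom divide_closed) (simp_all add: poly_over_def)
    then have p': "poly_over K p'"
      unfolding p'_def using less.prems assms(2) by (intro poly_over_diff poly_over_mult)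
    have "degree m \<le> degree p - degree q" unfolding m_def by (rule degree_monom_le)
    then have "degree (m * q) \<le> degree p" using degree_mult_le[of m q] deg_qp by linarith
    then have "degree p' \<le> degree p" unfolding p'_def by (intro degree_diff_le) simp_all
    moreover have "coeff p' (degree p) = 0"
      unfolding p'_def m_def using deg_qp assms(3) by (simp add: coeff_monom_mult)
    ultimately have "p' = 0 \<or> degree p' < degree p"
      using degree_less_if_less_eqI by blast
    then obtain d r where dr: "poly_over K d" "poly_over K r" "p' = q * d + r"
      "r = 0 \<or> degree r < degree q"
      using less.hyps[OF _ p'] poly_over_0 by (metis add.right_neutral mult_zero_right)
    then have "p = q * (d + m) + r" unfolding p'_def by (simp add: algebra_simps)
    then show ?thesis using dr poly_over_add[OF dr(1) m] by blast
  qed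
qed

lemma dvd_by_min_degree_root_poly:
  assumes h: "poly_over K h" "h \<noteq> 0" "poly h \<phi> = 0"
    and min: "\<And>r. poly_over K r \<Longrightarrow> r \<noteq> 0 \<Longrightarrow> poly r \<phi> = 0 \<Longrightarrow> degree h \<le> degree r"
    and g: "poly_over K g" "poly g \<phi> = 0"
  shows "\<exists>d. poly_over K d \<and> g = h * d"
proof -
  obtain d r where dr: "poly_over K d" "poly_over K r" "g = h * d + r" "r = 0 \<or> degree r < degree h"
    using poly_over_division[OF g(1) h(1,2)] by blast
  have "poly r \<phi> = 0" using g(2) h(3) dr(3) by simp
  then have "r = 0" using min[OF dr(2)] dr(4) by fastforce
  then show ?thesis using dr by auto
qed

lemma irreducible_over_root_transfer:
  assumes irr: "irreducible_over K P" and g: "poly_over K g"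
    and common: "poly P \<phi> = 0" "poly g \<phi> = 0" and root: "poly P \<theta> = 0"
  shows "poly g \<theta> = 0"
proof -
  have P: "poly_over K P" "P \<noteq> 0" using irr by (auto simp: irreducible_over_def)
  define S where "S = {h. poly_over K h \<and> h \<noteq> 0 \<and> poly h \<phi> = 0}"
  have "P \<in> S" using P common by (simp add: S_def)
  define h where "h = (ARG_MIN degree h. h \<in> S)"
  have "h \<in> S" and min: "\<And>r. r \<in> S \<Longrightarrow> degree h \<le> degree r"
    using arg_min_nat_lemma[of "\<lambda>h. h \<in> S" P degree] \<open>P \<in> S\<close> unfolding h_def by auto
  then have h: "poly_over K h" "h \<noteq> 0" "poly h \<phi> = 0" by (auto simp: S_def)
  have h_min: "degree h \<le> degree r" if "poly_over K r" "r \<noteq> 0" "poly r \<phi> = 0" for r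
    using min that by (simp add: S_def)
  have h_dvd: "\<exists>d. poly_over K d \<and> g' = h * d" if "poly_over K g'" "poly g' \<phi> = 0" for g'
    by (rule dvd_by_min_degree_root_poly[OF h h_min that])
  obtain d where d: "poly_over K d" "P = h * d" using h_dvd[OF P(1) common(1)] by blast
  have "degree h \<noteq> 0"
  proof
    assume "degree h = 0"
    then obtain c where "h = [:c:]" by (rule degree_eq_zeroE)
    then show False using h(2,3) by simp
  qed
  then have "degree d = 0" using irr d unfolding irreducible_over_def by (metis h(1))
  then obtain c where "d = [:c:]" by (rule degree_eq_zeroE)
  then have "poly h \<theta> = 0" using root d(2) P(2) by auto
  moreover obtain d' where "g = h * d'" using h_dvd[OF g common(2)] by blast
  ultimately show ?thesis by simp
qed

lemma poly_over_small_delta: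
  assumes "poly_over K (f j j)" "poly_over K (f j k)" "poly_over K (f k k)"
  shows "poly_over K (small_delta f j k)"
  unfolding small_delta_def using assms
  by (intro poly_over_diff poly_over_power poly_over_mult poly_over_numeral)

end

section \<open>Quadratic forms\<close>

lemma bilinear_form_swap:
  fixes M :: "nat \<Rightarrow> nat \<Rightarrow> 'a :: comm_semiring_0"
  assumes "\<And>l m. l < n \<Longrightarrow> m < n \<Longrightarrow> M l m = M m l"
  shows "(\<Sum>l<n. u l * (\<Sum>m<n. M l m * w m)) = (\<Sum>m<n. w m * (\<Sum>l<n. M m l * u l))"
proof -
  have "(\<Sum>l<n. u l * (\<Sum>m<n. M l m * w m)) = (\<Sum>l<n. \<Sum>m<n. w m * (M m l * u l))"
    unfolding sum_distrib_left using assms by (intro sum.cong refl) (simp add: mult_ac)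
  also have "\<dots> = (\<Sum>m<n. \<Sum>l<n. w m * (M m l * u l))" by (rule sum.swap)
  also have "\<dots> = (\<Sum>m<n. w m * (\<Sum>l<n. M m l * u l))" by (simp only: sum_distrib_left)
  finally show ?thesis .
qed

lemma quadratic_form_kernel_eq_0:
  fixes M :: "nat \<Rightarrow> nat \<Rightarrow> 'a :: comm_ring"
  assumes "\<And>l. l < n \<Longrightarrow> (\<Sum>m<n. M l m * w m) = 0"
  shows "(\<Sum>l<n. \<Sum>m<n. M l m * w l * w m) = 0"
proof -
  have "(\<Sum>l<n. \<Sum>m<n. M l m * w l * w m) = (\<Sum>l<n. w l * (\<Sum>m<n. M l m * w m))"
    by (simp add: sum_distrib_left mult.commute mult.left_commute)
  also have "\<dots> = 0" using assms by simp
  finally show ?thesis .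
qed

lemma weighted_quadratic_form_kernel_eq_0:
  fixes M :: "nat \<Rightarrow> nat \<Rightarrow> 'a :: comm_ring"
  assumes sym: "\<And>l m. l < n \<Longrightarrow> m < n \<Longrightarrow> M l m = M m l"
    and kernel: "\<And>l. l < n \<Longrightarrow> (\<Sum>m<n. M l m * w m) = 0"
  shows "(\<Sum>l<n. \<Sum>m<n. (c l + d m) * M l m * w l * w m) = 0"
proof -
  have "(\<Sum>l<n. \<Sum>m<n. (c l + d m) * M l m * w l * w m)
      = (\<Sum>l<n. \<Sum>m<n. c l * w l * (M l m * w m)) + (\<Sum>l<n. \<Sum>m<n. d m * w m * (M m l * w l))"
    unfolding sum.distrib[symmetric] using sym by (intro sum.cong refl) (simp add: algebra_simps)
  also have "(\<Sum>l<n. \<Sum>m<n. d m * w m * (M m l * w l)) = (\<Sum>m<n. \<Sum>l<n. d m * w m * (M m l * w l))"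
    by (rule sum.swap)
  also have "(\<Sum>l<n. \<Sum>m<n. c l * w l * (M l m * w m)) + \<dots> = 0"
    using kernel by (simp add: sum_distrib_left[symmetric])
  finally show ?thesis .
qed

lemma quadratic_form_pencil:
  fixes H :: "nat \<Rightarrow> nat \<Rightarrow> 'a :: comm_ring_1" and n :: nat
  defines "B u w \<equiv> \<Sum>l<n. \<Sum>m<n. H l m * u l * w m"
  shows "B (\<lambda>l. \<alpha> * x l + \<beta> * v l) (\<lambda>l. \<alpha> * x l + \<beta> * v l)
    = \<alpha>\<^sup>2 * B x x + \<alpha> * \<beta> * (B x v + B v x) + \<beta>\<^sup>2 * B v v"
proof -
  have "H l m * (\<alpha> * x l + \<beta> * v l) * (\<alpha> * x m + \<beta> * v m)
      = \<alpha>\<^sup>2 * (H l m * x l * x m) + (\<alpha> * \<beta> * (H l m * x l * v m) + \<alpha> * \<beta> * (H l m * v l * x m))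
        + \<beta>\<^sup>2 * (H l m * v l * v m)" for l m
    by (simp add: algebra_simps power2_eq_square)
  then show ?thesis
    unfolding B_def by (simp add: sum.distrib sum_distrib_left distrib_left)
qed

lemma binary_quadratic_form_nontrivial_zero:
  fixes A B C :: complex
  obtains \<alpha> \<beta> where "\<alpha> \<noteq> 0 \<or> \<beta> \<noteq> 0" "\<alpha>\<^sup>2 * A + \<alpha> * \<beta> * B + \<beta>\<^sup>2 * C = 0"
proof (cases "A = 0")
  case True
  then show ?thesis using that[of 1 0] by simp
next
  case False
  then have "degree [:C, B, A:] = 2" by simp
  then obtain \<alpha> where "poly [:C, B, A:] \<alpha> = 0"
    using fundamental_theorem_of_algebra[of "[:C, B, A:]"] constant_degree[of "[:C, B, A:]"] by auto
  then show ?thesis using that[of \<alpha> 1] by (simp add: algebra_simps power2_eq_square)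
qed

lemma deriv_quadratic_form_component:
  fixes M :: "nat \<Rightarrow> nat \<Rightarrow> complex"
  assumes sym: "\<And>i j. i < n \<Longrightarrow> j < n \<Longrightarrow> M i j = M j i" and l: "l < n"
  shows "deriv (\<lambda>y. \<Sum>i<n. \<Sum>j<n. M i j * (x(l := y)) i * (x(l := y)) j) (x l)
    = 2 * (\<Sum>j<n. M l j * x j)"
proof -
  have upd: "((\<lambda>y. (x(l := y)) i) has_field_derivative (if i = l then 1 else 0)) (at z)" for i z
    by (cases "i = l") (auto intro: derivative_eq_intros)
  have "((\<lambda>y. \<Sum>i<n. \<Sum>j<n. M i j * (x(l := y)) i * (x(l := y)) j) has_field_derivative
      (\<Sum>i<n. \<Sum>j<n. M i j * ((if i = l then x j else 0) + (if j = l then x i else 0))))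
      (at (x l))"
    by (intro DERIV_sum) (rule DERIV_cong, (rule DERIV_mult DERIV_cmult upd)+, simp)
  also have "(\<Sum>i<n. \<Sum>j<n. M i j * ((if i = l then x j else 0) + (if j = l then x i else 0)))
      = (\<Sum>i<n. (if i = l then \<Sum>j<n. M l j * x j else 0) + M l i * x i)"
  proof (intro sum.cong refl)
    fix i assume "i \<in> {..<n}"
    then have sym_il: "M i l = M l i" using sym l by simp
    have "(\<Sum>j<n. M i j * ((if i = l then x j else 0) + (if j = l then x i else 0)))
        = (\<Sum>j<n. if i = l then M i j * x j else 0) + (\<Sum>j<n. if j = l then M i j * x i else 0)"
      unfolding sum.distrib[symmetric] by (rule sum.cong) (simp_all add: distrib_left)
    also have "\<dots> = (if i = l then \<Sum>j<n. M l j * x j else 0) + M l i * x i"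
      using l sym_il by (cases "i = l") simp_all
    finally show "(\<Sum>j<n. M i j * ((if i = l then x j else 0) + (if j = l then x i else 0)))
        = (if i = l then \<Sum>j<n. M l j * x j else 0) + M l i * x i" .
  qed
  also have "\<dots> = (\<Sum>i<n. if i = l then \<Sum>j<n. M l j * x j else 0) + (\<Sum>i<n. M l i * x i)"
    by (rule sum.distrib)
  also have "\<dots> = 2 * (\<Sum>j<n. M l j * x j)"
    using l by (simp only: sum.delta finite_lessThan lessThan_iff if_True mult_2)
  finally show ?thesis by (rule DERIV_imp_deriv)
qed

lemma distinct_if_insert_eq_012:
  assumes "{i, j, k} = {0, 1, 2 :: nat}"
  shows "i \<noteq> j" "i \<noteq> k" "j \<noteq> k"
proof -
  have "card {i, j, k} = 3" using assms by simp
  then show "i \<noteq> j" "i \<noteq> k" "j \<noteq> k" by (auto simp: card_insert_if split: if_splits)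
qed

lemma sum_lessThan_3_permute:
  assumes "{i, j, k} = {0, 1, 2 :: nat}"
  shows "(\<Sum>l<3. g l) = g i + g j + (g k :: 'a :: comm_monoid_add)"
proof -
  have "{..<3 :: nat} = {i, j, k}" using assms by auto
  then show ?thesis using distinct_if_insert_eq_012[OF assms] by (simp add: add.assoc)
qed

lemma symmetric_kernel_vector_off_coordinate:
  fixes M :: "nat \<Rightarrow> nat \<Rightarrow> complex"
  assumes sym: "\<And>l m. l < 3 \<Longrightarrow> m < 3 \<Longrightarrow> M l m = M m l"
    and ijk: "{i, j, k} = {0, 1, 2}"
    and x: "x i \<noteq> 0" "\<And>l. l < 3 \<Longrightarrow> (\<Sum>m<3. M l m * x m) = 0"
    and minor: "M j k ^ 2 = M j j * M k k"
  obtains v where "v i = 0" "v j \<noteq> 0 \<or> v k \<noteq> 0" "\<And>l. l < 3 \<Longrightarrow> (\<Sum>m<3. M l m * v m) = 0"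
proof -
  note distinct = distinct_if_insert_eq_012[OF ijk]
  note sum3 = sum_lessThan_3_permute[OF ijk]
  have "{i, j, k} \<subseteq> {..<3}" unfolding ijk by auto
  then have lt: "i < 3" "j < 3" "k < 3" by auto
  obtain vj vk where v_nz: "vj \<noteq> 0 \<or> vk \<noteq> 0"
    and v_j: "M j j * vj + M j k * vk = 0" and v_k: "M k j * vj + M k k * vk = 0"
  proof (cases "M j j = 0 \<and> M j k = 0")
    case True
    then show ?thesis using that[of 1 0] sym[OF lt(2,3)] by auto
  next
    case False
    then show ?thesis
      using that[of "M j k" "- M j j"] sym[OF lt(2,3)] minor by (auto simp: power2_eq_square algebra_simps)
  qed
  define v where "v l = (if l = j then vj else if l = k then vk else 0)" for l
  have v: "v i = 0" "v j = vj" "v k = vk" using distinct by (auto simp: v_def)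
  have Mv_j: "(\<Sum>m<3. M j m * v m) = 0" and Mv_k: "(\<Sum>m<3. M k m * v m) = 0"
    unfolding sum3 v using v_j v_k by simp_all
  have "(\<Sum>l<3. x l * (\<Sum>m<3. M l m * v m)) = (\<Sum>m<3. v m * (\<Sum>l<3. M m l * x l))"
    by (rule bilinear_form_swap[OF sym])
  also have "\<dots> = 0" using x(2) by simp
  finally have "x i * (\<Sum>m<3. M i m * v m) = 0"
    using sum3[of "\<lambda>l. x l * (\<Sum>m<3. M l m * v m)"] Mv_j Mv_k by simp
  then have "(\<Sum>m<3. M i m * v m) = 0" using x(1) by simp
  then have "(\<Sum>m<3. M l m * v m) = 0" if "l < 3" for l
    using that Mv_j Mv_k ijk by auto
  then show ?thesis using that v v_nz by blast
qed

lemma isotropic_kernel_vector: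
  fixes M H :: "nat \<Rightarrow> nat \<Rightarrow> complex"
  assumes sym: "\<And>l m. l < 3 \<Longrightarrow> m < 3 \<Longrightarrow> M l m = M m l"
    and ijk: "{i, j, k} = {0, 1, 2}"
    and x: "x i \<noteq> 0" "\<And>l. l < 3 \<Longrightarrow> (\<Sum>m<3. M l m * x m) = 0"
    and minor: "M j k ^ 2 = M j j * M k k"
  obtains w where "\<exists>l<3. w l \<noteq> 0" "\<And>l. l < 3 \<Longrightarrow> (\<Sum>m<3. M l m * w m) = 0"
    "(\<Sum>l<3. \<Sum>m<3. H l m * w l * w m) = 0"
proof -
  obtain v where v: "v i = 0" "v j \<noteq> 0 \<or> v k \<noteq> 0"
    and v_kernel: "\<And>l. l < 3 \<Longrightarrow> (\<Sum>m<3. M l m * v m) = 0"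
    using symmetric_kernel_vector_off_coordinate[OF sym ijk x minor] by blast
  define B where "B u w = (\<Sum>l<3. \<Sum>m<3. H l m * u l * w m)" for u w :: "nat \<Rightarrow> complex"
  obtain \<alpha> \<beta> where \<alpha>\<beta>: "\<alpha> \<noteq> 0 \<or> \<beta> \<noteq> 0"
    and isotropic: "\<alpha>\<^sup>2 * B x x + \<alpha> * \<beta> * (B x v + B v x) + \<beta>\<^sup>2 * B v v = 0"
    by (rule binary_quadratic_form_nontrivial_zero)
  define w where "w l = \<alpha> * x l + \<beta> * v l" for l
  have "B w w = \<alpha>\<^sup>2 * B x x + \<alpha> * \<beta> * (B x v + B v x) + \<beta>\<^sup>2 * B v v"
    unfolding B_def w_def by (rule quadratic_form_pencil)
  then have "B w w = 0" using isotropic by simp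
  moreover have "\<exists>l<3. w l \<noteq> 0"
  proof -
    have "{i, j, k} \<subseteq> {..<3}" unfolding ijk by auto
    then show ?thesis using \<alpha>\<beta> v x(1) by (cases "\<alpha> = 0") (auto simp: w_def)
  qed
  moreover have "(\<Sum>m<3. M l m * w m) = 0" if "l < 3" for l
  proof -
    have "(\<Sum>m<3. M l m * w m) = \<alpha> * (\<Sum>m<3. M l m * x m) + \<beta> * (\<Sum>m<3. M l m * v m)"
      unfolding w_def by (simp add: algebra_simps sum.distrib sum_distrib_left)
    then show ?thesis using x(2)[OF that] v_kernel[OF that] by simp
  qed
  ultimately show ?thesis using that unfolding B_def by blast
qed

section \<open>Partial derivatives of the quadratic form\<close>

text \<open>The truncated exponents \<open>k - 1\<close> and \<open>d - k - 1\<close> are harmless: at \<open>k = 0\<close>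
  (resp. \<open>k = d\<close>) the coefficient \<open>of_nat k\<close> (resp. \<open>of_nat (d - k)\<close>) vanishes.\<close>

definition hom_deriv_s :: "nat \<Rightarrow> complex poly \<Rightarrow> complex \<Rightarrow> complex \<Rightarrow> complex" where
  "hom_deriv_s d f s t = (\<Sum>k\<le>d. coeff f k * (of_nat k * s ^ (k - 1)) * t ^ (d - k))"

definition hom_deriv_t :: "nat \<Rightarrow> complex poly \<Rightarrow> complex \<Rightarrow> complex \<Rightarrow> complex" where
  "hom_deriv_t d f s t = (\<Sum>k\<le>d. coeff f k * s ^ k * (of_nat (d - k) * t ^ (d - k - 1)))"

lemma has_field_derivative_hom_eval_s:
  "((\<lambda>s. hom_eval d f s t) has_field_derivative hom_deriv_s d f s t) (at s)"
  unfolding hom_eval_def hom_deriv_s_def by (intro DERIV_sum) (auto intro!: derivative_eq_intros)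

lemma has_field_derivative_hom_eval_t:
  "((\<lambda>t. hom_eval d f s t) has_field_derivative hom_deriv_t d f s t) (at t)"
  unfolding hom_eval_def hom_deriv_t_def by (intro DERIV_sum) (auto intro!: derivative_eq_intros)

lemma hom_eval_euler:
  "s * hom_deriv_s d f s t + t * hom_deriv_t d f s t = of_nat d * hom_eval d f s t"
proof -
  have "s * (coeff f k * (of_nat k * s ^ (k - 1)) * t ^ (d - k))
      + t * (coeff f k * s ^ k * (of_nat (d - k) * t ^ (d - k - 1)))
      = of_nat d * (coeff f k * s ^ k * t ^ (d - k))" if "k \<le> d" for k
  proof -
    have s: "s * (of_nat k * s ^ (k - 1)) = of_nat k * s ^ k" by (cases k) auto
    have t: "t * (of_nat (d - k) * t ^ (d - k - 1)) = of_nat (d - k) * t ^ (d - k)"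
      by (cases "d - k") auto
    have d: "of_nat d = (of_nat k + of_nat (d - k) :: complex)" using that by (simp add: of_nat_diff)
    have "s * (coeff f k * (of_nat k * s ^ (k - 1)) * t ^ (d - k))
        + t * (coeff f k * s ^ k * (of_nat (d - k) * t ^ (d - k - 1)))
        = coeff f k * t ^ (d - k) * (s * (of_nat k * s ^ (k - 1)))
        + coeff f k * s ^ k * (t * (of_nat (d - k) * t ^ (d - k - 1)))"
      by (simp add: algebra_simps)
    also have "\<dots> = of_nat d * (coeff f k * s ^ k * t ^ (d - k))"
      unfolding s t d by (simp add: algebra_simps)
    finally show ?thesis .
  qed
  then show ?thesis
    unfolding hom_deriv_s_def hom_deriv_t_def hom_eval_def sum_distrib_left sum.distrib[symmetric]
    by (intro sum.cong) simp_all
qed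

lemma hom_eval_t_1: "degree f \<le> d \<Longrightarrow> hom_eval d f s 1 = poly f s"
  unfolding hom_eval_def poly_altdef
  by (simp, rule sum.mono_neutral_right) (auto simp: coeff_eq_0)

lemma deriv_Qform_s:
  "deriv (\<lambda>s'. Qform a e f s' t x) s =
    (\<Sum>i<3. \<Sum>j<3. hom_deriv_s (a i + a j + e) (f i j) s t * x i * x j)"
  unfolding Qform_def
  by (intro DERIV_imp_deriv DERIV_sum DERIV_cmult_right has_field_derivative_hom_eval_s)

lemma deriv_Qform_t:
  "deriv (\<lambda>t'. Qform a e f s t' x) t =
    (\<Sum>i<3. \<Sum>j<3. hom_deriv_t (a i + a j + e) (f i j) s t * x i * x j)"
  unfolding Qform_def
  by (intro DERIV_imp_deriv DERIV_sum DERIV_cmult_right has_field_derivative_hom_eval_t)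

lemma deriv_Qform_x:
  assumes "\<And>i j. i < 3 \<Longrightarrow> j < 3 \<Longrightarrow> f i j = f j i" "l < 3"
  shows "deriv (\<lambda>y. Qform a e f s t (x(l := y))) (x l) =
    2 * (\<Sum>m<3. hom_eval (a l + a m + e) (f l m) s t * x m)"
  unfolding Qform_def using assms
  by (intro deriv_quadratic_form_component) (simp_all add: add.commute)

section \<open>Singular points of the surface\<close>

lemma deriv_Qform_t_eq_0_at_isotropic_kernel_vector:
  assumes f_deg: "\<And>l m. l < 3 \<Longrightarrow> m < 3 \<Longrightarrow> degree (f l m) \<le> a l + a m + e"
    and sym: "\<And>l m. l < 3 \<Longrightarrow> m < 3 \<Longrightarrow> poly (f l m) \<theta> = poly (f m l) \<theta>"
    and kernel: "\<And>l. l < 3 \<Longrightarrow> (\<Sum>m<3. poly (f l m) \<theta> * w m) = 0"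
    and isotropic: "(\<Sum>l<3. \<Sum>m<3. hom_deriv_s (a l + a m + e) (f l m) \<theta> 1 * w l * w m) = 0"
  shows "deriv (\<lambda>t. Qform a e f \<theta> t w) 1 = 0"
proof -
  define M where "M l m = poly (f l m) \<theta>" for l m
  have euler: "hom_deriv_t (a l + a m + e) (f l m) \<theta> 1
      = (of_nat (a l + e) + of_nat (a m)) * M l m - \<theta> * hom_deriv_s (a l + a m + e) (f l m) \<theta> 1"
    if "l < 3" "m < 3" for l m
  proof -
    have "\<theta> * hom_deriv_s (a l + a m + e) (f l m) \<theta> 1 + hom_deriv_t (a l + a m + e) (f l m) \<theta> 1
        = of_nat (a l + a m + e) * M l m"
      using hom_eval_euler[of \<theta> "a l + a m + e" "f l m" 1] hom_eval_t_1[OF f_deg[OF that]]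
      by (simp add: M_def)
    then show ?thesis by (simp add: eq_diff_eq add.commute add.left_commute)
  qed
  have "deriv (\<lambda>t. Qform a e f \<theta> t w) 1
      = (\<Sum>l<3. \<Sum>m<3. (of_nat (a l + e) + of_nat (a m)) * M l m * w l * w m)
        - \<theta> * (\<Sum>l<3. \<Sum>m<3. hom_deriv_s (a l + a m + e) (f l m) \<theta> 1 * w l * w m)"
    unfolding deriv_Qform_t sum_distrib_left sum_subtractf[symmetric]
  proof (intro sum.cong refl)
    fix l m :: nat assume "l \<in> {..<3}" "m \<in> {..<3}"
    then have "l < 3" "m < 3" by simp_all
    show "hom_deriv_t (a l + a m + e) (f l m) \<theta> 1 * w l * w m
        = (of_nat (a l + e) + of_nat (a m)) * M l m * w l * w m
          - \<theta> * (hom_deriv_s (a l + a m + e) (f l m) \<theta> 1 * w l * w m)"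
      unfolding euler[OF \<open>l < 3\<close> \<open>m < 3\<close>] by (simp add: algebra_simps)
  qed
  also have "\<dots> = 0"
    using weighted_quadratic_form_kernel_eq_0[of 3 M w] sym kernel isotropic by (simp add: M_def)
  finally show ?thesis .
qed

lemma not_smooth_surface_at_isotropic_kernel_vector:
  assumes f_sym: "\<And>l m. l < 3 \<Longrightarrow> m < 3 \<Longrightarrow> f l m = f m l"
    and f_deg: "\<And>l m. l < 3 \<Longrightarrow> m < 3 \<Longrightarrow> degree (f l m) \<le> a l + a m + e"
    and w: "\<exists>l<3. w l \<noteq> 0"
    and kernel: "\<And>l. l < 3 \<Longrightarrow> (\<Sum>m<3. poly (f l m) \<theta> * w m) = 0"
    and isotropic: "(\<Sum>l<3. \<Sum>m<3. hom_deriv_s (a l + a m + e) (f l m) \<theta> 1 * w l * w m) = 0"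
  shows "\<not> smooth_surface a e f"
proof
  assume smooth: "smooth_surface a e f"
  have M: "hom_eval (a l + a m + e) (f l m) \<theta> 1 = poly (f l m) \<theta>" if "l < 3" "m < 3" for l m
    using hom_eval_t_1[OF f_deg[OF that]] .
  have "Qform a e f \<theta> 1 w = (\<Sum>l<3. \<Sum>m<3. poly (f l m) \<theta> * w l * w m)"
    unfolding Qform_def by (intro sum.cong refl) (simp add: M)
  then have Q: "Qform a e f \<theta> 1 w = 0" using quadratic_form_kernel_eq_0[OF kernel] by simp
  have ds: "deriv (\<lambda>s. Qform a e f s 1 w) \<theta> = 0"
    using isotropic by (simp add: deriv_Qform_s)
  have poly_sym: "poly (f l m) \<theta> = poly (f m l) \<theta>" if "l < 3" "m < 3" for l m
    using f_sym[OF that] by simp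
  have dt: "deriv (\<lambda>t. Qform a e f \<theta> t w) 1 = 0"
    using deriv_Qform_t_eq_0_at_isotropic_kernel_vector[of f a e \<theta> w] f_deg poly_sym kernel isotropic
    by blast
  have dx: "\<forall>l<3. deriv (\<lambda>y. Qform a e f \<theta> 1 (w(l := y))) (w l) = 0"
    using deriv_Qform_x[of f, OF f_sym] M kernel by simp
  show False
    using smooth[unfolded smooth_surface_def, rule_format, of \<theta> 1 w] w Q ds dt dx by simp
qed

lemma small_delta_nonzero_at_singular_conic:
  assumes f_sym: "\<And>l m. l < 3 \<Longrightarrow> m < 3 \<Longrightarrow> f l m = f m l"
    and f_deg: "\<And>l m. l < 3 \<Longrightarrow> m < 3 \<Longrightarrow> degree (f l m) \<le> a l + a m + e"
    and smooth: "smooth_surface a e f"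
    and x: "conic_singular_point a e f \<theta> x" "x i \<noteq> 0"
    and ijk: "{i, j, k} = {0, 1, 2}"
  shows "poly (small_delta f j k) \<theta> \<noteq> 0"
proof
  assume delta: "poly (small_delta f j k) \<theta> = 0"
  define M where "M l m = poly (f l m) \<theta>" for l m
  have M_sym: "M l m = M m l" if "l < 3" "m < 3" for l m
    using f_sym[OF that] by (simp add: M_def)
  have x_kernel: "(\<Sum>m<3. M l m * x m) = 0" if "l < 3" for l
    using x(1) deriv_Qform_x[of f, OF f_sym that, of a e \<theta> 1 x] hom_eval_t_1 f_deg that
    by (simp add: conic_singular_point_def M_def)
  have minor: "M j k ^ 2 = M j j * M k k"
    using delta by (simp add: small_delta_def M_def power2_eq_square algebra_simps)
  obtain w where "\<exists>l<3. w l \<noteq> 0" "\<And>l. l < 3 \<Longrightarrow> (\<Sum>m<3. M l m * w m) = 0"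
    "(\<Sum>l<3. \<Sum>m<3. hom_deriv_s (a l + a m + e) (f l m) \<theta> 1 * w l * w m) = 0"
    using isotropic_kernel_vector[OF M_sym ijk x(2) x_kernel minor,
        where H = "\<lambda>l m. hom_deriv_s (a l + a m + e) (f l m) \<theta> 1"] by blast
  then have "\<not> smooth_surface a e f"
    unfolding M_def by (intro not_smooth_surface_at_isotropic_kernel_vector[of f a e, OF f_sym f_deg])
  then show False using smooth by contradiction
qed

lemma degree_small_delta_le:
  assumes "degree (f j k) \<le> n" "degree (f j j) + degree (f k k) \<le> 2 * n"
  shows "degree (small_delta f j k) \<le> 2 * n"
proof -
  have const: "degree (c * p) \<le> degree p" if "degree c = 0" for c p :: "complex poly"
    using degree_mult_le[of c p] that by simp
  have "degree ((2 * f j k) ^ 2) \<le> 2 * degree (2 * f j k)"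
    using degree_power_le[of "2 * f j k" 2] by (simp only: mult.commute)
  also have "\<dots> \<le> 2 * n" using const[of 2 "f j k"] assms(1) by simp
  finally have "degree ((2 * f j k) ^ 2) \<le> 2 * n" .
  moreover have "degree (4 * f j j * f k k) \<le> 2 * n"
    using degree_mult_le[of "4 * f j j" "f k k"] const[of 4 "f j j"] assms(2) by simp
  ultimately show ?thesis unfolding small_delta_def by (rule degree_diff_le)
qed

theorem lemma4p7:
  fixes K :: "complex set" and a :: "nat \<Rightarrow> nat" and e :: nat
    and f :: "nat \<Rightarrow> nat \<Rightarrow> complex poly"
    and Dp :: "complex poly" and \<theta> :: complex and x :: "nat \<Rightarrow> complex"
    and i j k :: nat
  assumes K: "number_field K"
    and a0: "a 0 = 0"
    and f_sym: "\<And>i j. i < 3 \<Longrightarrow> j < 3 \<Longrightarrow> f i j = f j i"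
    and f_deg: "\<And>i j. i < 3 \<Longrightarrow> j < 3 \<Longrightarrow> degree (f i j) \<le> a i + a j + e"
    and f_int: "\<And>i j. i < 3 \<Longrightarrow> j < 3 \<Longrightarrow> poly_over (ring_of_integers K) (f i j)"
    and smooth: "smooth_surface a e f"
    and t_ndvd: "coeff (Delta f) (2 * a 1 + 2 * a 2 + 3 * e) \<noteq> 0"
    \<comment> \<open>the closed point p: Delta_p is an irreducible factor of Delta over O_K with
        Delta_p(1,0) \<noteq> 0; Dp = Delta_p(s,1), a binary form of degree (degree Dp)\<close>
    and Dp_int: "poly_over (ring_of_integers K) Dp"
    and Dp_irr: "irreducible_over K Dp"
    and Dp_dvd: "\<exists>q. poly_over K q \<and> Delta f = Dp * q"
    and theta: "poly Dp \<theta> = 0"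
    and x_sing: "conic_singular_point a e f \<theta> x"
    and i_def: "i = (LEAST l. x l \<noteq> 0)"
    and jk: "j < k" "{i, j, k} = {0, 1, 2}"
  shows "form_resultant (degree Dp) (2 * (a j + a k + e)) Dp (small_delta f j k) \<noteq> 0"
proof
  assume res: "form_resultant (degree Dp) (2 * (a j + a k + e)) Dp (small_delta f j k) = 0"
  have "{i, j, k} \<subseteq> {..<3}" unfolding jk(2) by auto
  then have lt: "i < 3" "j < 3" "k < 3" by auto
  have deg: "degree (small_delta f j k) \<le> 2 * (a j + a k + e)"
    using f_deg[OF lt(2,3)] f_deg[OF lt(2,2)] f_deg[OF lt(3,3)]
    by (intro degree_small_delta_le) simp_all
  have "degree Dp > 0" using Dp_irr by (simp add: irreducible_over_def)
  then obtain \<phi> where \<phi>: "poly Dp \<phi> = 0" "poly (small_delta f j k) \<phi> = 0"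
    using resultant_sub_eq_0_imp_common_root[OF deg] res unfolding form_resultant_def by blast
  interpret complex_subfield K
    using K unfolding number_field_def by (intro complex_subfield.intro) blast
  have f_K: "poly_over K (f l m)" if "l < 3" "m < 3" for l m
    using f_int[OF that] unfolding poly_over_def ring_of_integers_def by blast
  have "poly (small_delta f j k) \<theta> = 0"
    using poly_over_small_delta[OF f_K[OF lt(2,2)] f_K[OF lt(2,3)] f_K[OF lt(3,3)]]
    by (rule irreducible_over_root_transfer[OF Dp_irr _ \<phi> theta])
  moreover have "x i \<noteq> 0"
    using x_sing LeastI_ex[of "\<lambda>l. x l \<noteq> 0"] unfolding i_def conic_singular_point_def by blast
  ultimately show False
    using small_delta_nonzero_at_singular_conic[of f a e, OF f_sym f_deg smooth x_sing _ jk(2)] by blast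
qed

end
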